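(* Let $\mathcal R$ be a commutative ring with identity, $\mathcal M,\mathcal N$ modules over $\mathcal R$, $s\in\mathbb N$, $Y\in\mathcal M^{s\times s}$, and $f:\mathrm{Nilp}(\mathcal M,Y)\to\mathcal N_{\mathrm{nc}}$ a nc function. Assume that there are $\ell$-linear mappings $f_\ell:(\mathcal M^{s\times s})^\ell\to\mathcal N^{s\times s}$, $\ell=0,1,\dots$, such that $$f(X)=\sum_{\ell=0}^\infty\Bigl(X-\bigoplus_{\alpha=1}^mY\Bigr)^{\odot_s\ell}f_\ell$$ for all $m\in\mathbb N$ and all $X\in\mathrm{Nilp}(\mathcal M,Y)\cap\mathcal M^{sm\times sm}$ (the sum having finitely many nonzero terms). Then $f_\ell=\Delta_R^\ell f(Y,\dots,Y)$ ($\ell+1$ arguments) for all $\ell$.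
   Context: $\mathcal M_{\mathrm{nc}}=\coprod_{n\ge1}\mathcal M^{n\times n}$; matrices over $\mathcal R$ act on matrices over $\mathcal M,\mathcal N$ by matrix multiplication; $X\oplus Y=\begin{bmatrix}X&0\\0&Y\end{bmatrix}$. A nc set is a subset closed under direct sums; $\Omega_n=\Omega\cap\mathcal M^{n\times n}$. A nc function $f:\Omega\to\mathcal N_{\mathrm{nc}}$ satisfies $f(\Omega_n)\subseteq\mathcal N^{n\times n}$, $f(X\oplus Y)=f(X)\oplus f(Y)$, $f(SXS^{-1})=Sf(X)S^{-1}$ whenever $S\in\mathcal R^{n\times n}$ invertible and $X,SXS^{-1}\in\Omega_n$. For $W\in\mathcal M^{sm\times sm}$ viewed as an $m\times m$ matrix $[W_{ij}]$ with blocks in $\mathcal M^{s\times s}$, $W^{\odot_s\ell}$ is the $m\times m$ matrix over $(\mathcal M^{s\times s})^{\otimes\ell}$ with $(i,k)$ entry $\sum_{j_1,\dots,j_{\ell-1}}W_{ij_1}\otimes\cdots\otimes W_{j_{\ell-1}k}$; for an $\ell$-linear $\varphi:(\mathcal M^{s\times s})^\ell\to\mathcal N^{s\times s}$, $W^{\odot_s\ell}\varphi\in\mathcal N^{sm\times sm}$ applies $\varphi$ (as a linear map on the tensor power) entrywise; for $\ell=0$, $W^{\odot_s0}\varphi=\bigoplus_{\alpha=1}^m\varphi$. $\mathrm{Nilp}(\mathcal M,Y)=\coprod_m\{X\in\mathcal M^{sm\times sm}:(X-\bigoplus_{\alpha=1}^mY)^{\odot_s\ell}=0\text{ for some }\ell\}$;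 it is a right admissible nc set (for all $X\in\Omega_n,X'\in\Omega_{n'},Z\in\mathcal M^{n\times n'}$ some invertible $r$ gives $\begin{bmatrix}X&rZ\\0&X'\end{bmatrix}\in\Omega$). Higher order operators: $f$ extends uniquely to a nc function $\tilde f$ on $\tilde\Omega=\{SXS^{-1}\}$ via $\tilde f(SXS^{-1})=Sf(X)S^{-1}$; for right admissible $\Omega$, $X^j\in\Omega_{n_j}$, $Z^j\in\mathcal M^{n_{j-1}\times n_j}$, the block upper bidiagonal matrix $B$ with diagonal $X^0,\dots,X^\ell$ and superdiagonal $Z^1,\dots,Z^\ell$ lies in $\tilde\Omega$ and $\Delta_R^\ell f(X^0,\dots,X^\ell)(Z^1,\dots,Z^\ell)$ is the $(1,\ell+1)$ block of $\tilde f(B)$; it is multilinear, and $\Delta_R^0f=f$. *)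

theory Defs
  imports Complex_Main
begin

text \<open>Matrices over a type are represented as functions nat => nat => 'a;
  an n x n matrix is one that vanishes outside the index range below n.
  An element of M_nc is a pair (n, X) with n >= 1 and X an n x n matrix.\<close>

type_synonym 'a mat = "nat \<Rightarrow> nat \<Rightarrow> 'a"

definition mat_ok :: "nat \<Rightarrow> 'a::zero mat \<Rightarrow> bool" where
  "mat_ok n X \<longleftrightarrow> (\<forall>i j. (n \<le> i \<or> n \<le> j) \<longrightarrow> X i j = 0)"

definition madd :: "'a::plus mat \<Rightarrow> 'a mat \<Rightarrow> 'a mat" where
  "madd A B = (\<lambda>i j. A i j + B i j)"

definition msub :: "'a::minus mat \<Rightarrow> 'a mat \<Rightarrow> 'a mat" where
  "msub A B = (\<lambda>i j. A i j - B i j)"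

definition msc :: "('r \<Rightarrow> 'a \<Rightarrow> 'a) \<Rightarrow> 'r \<Rightarrow> 'a mat \<Rightarrow> 'a mat" where
  "msc sc c A = (\<lambda>i j. sc c (A i j))"

definition dsum :: "nat \<Rightarrow> 'a::zero mat \<Rightarrow> nat \<Rightarrow> 'a mat \<Rightarrow> 'a mat" where
  "dsum n X n' X' = (\<lambda>i j. if i < n \<and> j < n then X i j
      else if n \<le> i \<and> n \<le> j \<and> i < n + n' \<and> j < n + n' then X' (i - n) (j - n) else 0)"

definition blkdiag :: "nat \<Rightarrow> nat \<Rightarrow> 'a::zero mat \<Rightarrow> 'a mat" where
  "blkdiag s m Y = (\<lambda>p q. if p < s * m \<and> q < s * m \<and> p div s = q div s
      then Y (p mod s) (q mod s) else 0)"

definition blk :: "nat \<Rightarrow> 'a::zero mat \<Rightarrow> nat \<Rightarrow> nat \<Rightarrow> 'a mat" where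
  "blk s W i j = (\<lambda>a b. if a < s \<and> b < s then W (i * s + a) (j * s + b) else 0)"

definition chain :: "nat \<Rightarrow> 'a::zero mat \<Rightarrow> nat \<Rightarrow> nat list \<Rightarrow> nat \<Rightarrow> 'a mat list" where
  "chain s W i js k = map2 (blk s W) (i # js) (js @ [k])"

definition seqs :: "nat \<Rightarrow> nat \<Rightarrow> nat list set" where
  "seqs m n = {js. length js = n \<and> set js \<subseteq> {..<m}}"

text \<open>(W^{odot_s l} phi): the sm x sm matrix whose (i,k) block is
  sum over j1..j(l-1) of phi(W_{i j1}, ..., W_{j(l-1) k}); for l = 0 it is
  the block diagonal matrix with m copies of phi [].  An l-linear map is
  represented as a function on lists of length l.\<close>
definition odot_apply :: "nat \<Rightarrow> nat \<Rightarrow> 'm::zero mat \<Rightarrow> nat \<Rightarrow> ('m mat list \<Rightarrow> 'n::comm_monoid_add mat) \<Rightarrow> 'n mat" where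
  "odot_apply s m W l \<phi> = (\<lambda>p q. if p < s * m \<and> q < s * m then
      (let i = p div s; a = p mod s; k = q div s; b = q mod s in
        if l = 0 then (if i = k then \<phi> [] a b else 0)
        else (\<Sum>js\<in>seqs m (l - 1). \<phi> (chain s W i js k) a b))
      else 0)"

text \<open>Tensor powers of M^{s x s} over R, realised as the free R-module on lists
  of s x s matrices (finitely supported functions to R) modulo the R-span of the
  multilinearity relations.  An element of the free module is zero in the
  tensor power iff it lies in the span below.\<close>
definition delta :: "'a \<Rightarrow> 'a \<Rightarrow> 'r::zero_neq_one" where
  "delta v = (\<lambda>w. if w = v then 1 else 0)"

inductive_set tz_span :: "('r::comm_ring_1 \<Rightarrow> 'm::ab_group_add \<Rightarrow> 'm) \<Rightarrow> nat \<Rightarrow> ('m mat list \<Rightarrow> 'r) set"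
  for sc :: "'r::comm_ring_1 \<Rightarrow> 'm::ab_group_add \<Rightarrow> 'm" and s :: nat where
  tz_zero: "(\<lambda>_. 0) \<in> tz_span sc s"
| tz_add: "\<lbrakk>t \<in> tz_span sc s; mat_ok s A; mat_ok s B;
     \<forall>x\<in>set xs. mat_ok s x; \<forall>y\<in>set ys. mat_ok s y\<rbrakk> \<Longrightarrow>
     (\<lambda>w. t w + c * (delta (xs @ [madd A B] @ ys) w - delta (xs @ [A] @ ys) w
                       - delta (xs @ [B] @ ys) w)) \<in> tz_span sc s"
| tz_scale: "\<lbrakk>t \<in> tz_span sc s; mat_ok s A;
     \<forall>x\<in>set xs. mat_ok s x; \<forall>y\<in>set ys. mat_ok s y\<rbrakk> \<Longrightarrow>
     (\<lambda>w. t w + c * (delta (xs @ [msc sc d A] @ ys) w - d * delta (xs @ [A] @ ys) w))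
       \<in> tz_span sc s"

text \<open>The (i,k) entry of W^{odot_s l}, an element of the free module.\<close>
definition tpow_elem :: "nat \<Rightarrow> nat \<Rightarrow> 'm::zero mat \<Rightarrow> nat \<Rightarrow> nat \<Rightarrow> nat \<Rightarrow> 'm mat list \<Rightarrow> 'r::comm_ring_1" where
  "tpow_elem s m W l i k = (\<lambda>w. if l = 0 then (if i = k \<and> w = [] then 1 else 0)
      else (\<Sum>js\<in>seqs m (l - 1). delta (chain s W i js k) w))"

definition odot_zero :: "('r::comm_ring_1 \<Rightarrow> 'm::ab_group_add \<Rightarrow> 'm) \<Rightarrow> nat \<Rightarrow> nat \<Rightarrow> 'm mat \<Rightarrow> nat \<Rightarrow> bool" where
  "odot_zero sc s m W l \<longleftrightarrow> (\<forall>i<m. \<forall>k<m. tpow_elem s m W l i k \<in> tz_span sc s)"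

definition Nilp :: "('r::comm_ring_1 \<Rightarrow> 'm::ab_group_add \<Rightarrow> 'm) \<Rightarrow> nat \<Rightarrow> 'm mat \<Rightarrow> (nat \<times> 'm mat) set" where
  "Nilp sc s Y = {(n, X). \<exists>m. 1 \<le> m \<and> n = s * m \<and> mat_ok n X \<and>
      (\<exists>l. odot_zero sc s m (msub X (blkdiag s m Y)) l)}"

definition rmat_mul :: "nat \<Rightarrow> 'r::comm_ring_1 mat \<Rightarrow> 'r mat \<Rightarrow> 'r mat" where
  "rmat_mul n S T = (\<lambda>i k. \<Sum>j<n. S i j * T j k)"

definition ident :: "nat \<Rightarrow> 'r::comm_ring_1 mat" where
  "ident n = (\<lambda>i j. if i = j \<and> i < n then 1 else 0)"

definition inv_pair :: "nat \<Rightarrow> 'r::comm_ring_1 mat \<Rightarrow> 'r mat \<Rightarrow> bool" where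
  "inv_pair n S T \<longleftrightarrow> mat_ok n S \<and> mat_ok n T \<and> rmat_mul n S T = ident n \<and> rmat_mul n T S = ident n"

definition lmul :: "('r \<Rightarrow> 'm \<Rightarrow> 'm::comm_monoid_add) \<Rightarrow> nat \<Rightarrow> 'r mat \<Rightarrow> 'm mat \<Rightarrow> 'm mat" where
  "lmul sc n S X = (\<lambda>i k. \<Sum>j<n. sc (S i j) (X j k))"

definition rmul :: "('r \<Rightarrow> 'm \<Rightarrow> 'm::comm_monoid_add) \<Rightarrow> nat \<Rightarrow> 'm mat \<Rightarrow> 'r mat \<Rightarrow> 'm mat" where
  "rmul sc n X T = (\<lambda>i k. \<Sum>j<n. sc (T j k) (X i j))"

definition nc_fun :: "('r::comm_ring_1 \<Rightarrow> 'm::ab_group_add \<Rightarrow> 'm) \<Rightarrow> ('r \<Rightarrow> 'n::ab_group_add \<Rightarrow> 'n)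
    \<Rightarrow> (nat \<times> 'm mat) set \<Rightarrow> (nat \<times> 'm mat \<Rightarrow> 'n mat) \<Rightarrow> bool" where
  "nc_fun scM scN \<Omega> f \<longleftrightarrow>
     (\<forall>n X. (n, X) \<in> \<Omega> \<longrightarrow> mat_ok n (f (n, X))) \<and>
     (\<forall>n X n' X'. (n, X) \<in> \<Omega> \<longrightarrow> (n', X') \<in> \<Omega> \<longrightarrow>
        f (n + n', dsum n X n' X') = dsum n (f (n, X)) n' (f (n', X'))) \<and>
     (\<forall>n X S T. (n, X) \<in> \<Omega> \<longrightarrow> inv_pair n S T \<longrightarrow>
        (n, rmul scM n (lmul scM n S X) T) \<in> \<Omega> \<longrightarrow>
        f (n, rmul scM n (lmul scM n S X) T) = rmul scN n (lmul scN n S (f (n, X))) T)"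

definition nc_ext :: "('r::comm_ring_1 \<Rightarrow> 'm::ab_group_add \<Rightarrow> 'm) \<Rightarrow> ('r \<Rightarrow> 'n::ab_group_add \<Rightarrow> 'n)
    \<Rightarrow> (nat \<times> 'm mat) set \<Rightarrow> (nat \<times> 'm mat \<Rightarrow> 'n mat) \<Rightarrow> nat \<Rightarrow> 'm mat \<Rightarrow> 'n mat" where
  "nc_ext scM scN \<Omega> f n Z = (THE W. \<exists>S T X. (n, X) \<in> \<Omega> \<and> inv_pair n S T \<and>
      Z = rmul scM n (lmul scM n S X) T \<and> W = rmul scN n (lmul scN n S (f (n, X))) T)"

definition bidiag :: "nat \<Rightarrow> 'a::zero mat list \<Rightarrow> 'a mat list \<Rightarrow> 'a mat" where
  "bidiag s Xs Zs = (\<lambda>p q. if p < s * length Xs \<and> q < s * length Xs then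
      (let i = p div s; j = q div s in
        if i = j then (Xs ! i) (p mod s) (q mod s)
        else if j = Suc i then (Zs ! i) (p mod s) (q mod s) else 0)
      else 0)"

text \<open>Delta_R^l f (X^0,...,X^l)(Z^1,...,Z^l) for s x s arguments:
  the (1, l+1) block of f~ applied to the bidiagonal matrix.\<close>
definition DeltaR :: "('r::comm_ring_1 \<Rightarrow> 'm::ab_group_add \<Rightarrow> 'm) \<Rightarrow> ('r \<Rightarrow> 'n::ab_group_add \<Rightarrow> 'n)
    \<Rightarrow> (nat \<times> 'm mat) set \<Rightarrow> (nat \<times> 'm mat \<Rightarrow> 'n mat) \<Rightarrow> nat \<Rightarrow> 'm mat list \<Rightarrow> 'm mat list \<Rightarrow> 'n mat" where
  "DeltaR scM scN \<Omega> f s Xs Zs =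
     blk s (nc_ext scM scN \<Omega> f (s * length Xs) (bidiag s Xs Zs)) 0 (length Zs)"

definition multilin :: "('r::comm_ring_1 \<Rightarrow> 'm::ab_group_add \<Rightarrow> 'm) \<Rightarrow> ('r \<Rightarrow> 'n::ab_group_add \<Rightarrow> 'n)
    \<Rightarrow> nat \<Rightarrow> nat \<Rightarrow> ('m mat list \<Rightarrow> 'n mat) \<Rightarrow> bool" where
  "multilin scM scN s l \<phi> \<longleftrightarrow>
     (\<forall>xs. length xs = l \<longrightarrow> (\<forall>x\<in>set xs. mat_ok s x) \<longrightarrow> mat_ok s (\<phi> xs)) \<and>
     (\<forall>xs ys A B. length xs + length ys + 1 = l \<longrightarrow> (\<forall>x\<in>set xs. mat_ok s x) \<longrightarrow>
        (\<forall>y\<in>set ys. mat_ok s y) \<longrightarrow> mat_ok s A \<longrightarrow> mat_ok s B \<longrightarrow>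
        \<phi> (xs @ [madd A B] @ ys) = madd (\<phi> (xs @ [A] @ ys)) (\<phi> (xs @ [B] @ ys))) \<and>
     (\<forall>xs ys A c. length xs + length ys + 1 = l \<longrightarrow> (\<forall>x\<in>set xs. mat_ok s x) \<longrightarrow>
        (\<forall>y\<in>set ys. mat_ok s y) \<longrightarrow> mat_ok s A \<longrightarrow>
        \<phi> (xs @ [msc scM c A] @ ys) = msc scN c (\<phi> (xs @ [A] @ ys)))"

end

theory Submission
  imports Defs
begin

text \<open>Let B be the block upper bidiagonal matrix with l + 1 diagonal blocks Y and
  superdiagonal blocks Z_1, ..., Z_l. Then W = B - (Y + ... + Y) is block superdiagonal, so every
  chain W_{i j_1}, ..., W_{j_(L-1) k} either contains a zero block or runs through the consecutive
  indices i, i + 1, ..., k = i + L. Hence W^{odot (l+1)} = 0, i.e. B lies in Nilp(M, Y), and in the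
  series for f(B) the (0, l) block receives the single term f_l(Z_1, ..., Z_l). Since f is defined
  at B, its extension agrees with f there, so that block is also Delta_R^l f(Y, ..., Y)(Z_1, ..., Z_l).\<close>

lemma tz_span_add:
  assumes "a \<in> tz_span sc s" "b \<in> tz_span sc s"
  shows "(\<lambda>w. a w + b w) \<in> tz_span sc s"
  using assms(2)
proof (induction b rule: tz_span.induct)
  case tz_zero
  then show ?case using assms(1) by simp
next
  case (tz_add t A B xs ys c)
  have "(\<lambda>w. (a w + t w) + c * (delta (xs @ [madd A B] @ ys) w - delta (xs @ [A] @ ys) w
                       - delta (xs @ [B] @ ys) w)) \<in> tz_span sc s"
    using tz_add by (intro tz_span.tz_add) auto
  then show ?case by (simp add: add.assoc)
next
  case (tz_scale t A xs ys c d)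
  have "(\<lambda>w. (a w + t w) + c * (delta (xs @ [msc sc d A] @ ys) w - d * delta (xs @ [A] @ ys) w))
       \<in> tz_span sc s"
    using tz_scale by (intro tz_span.tz_scale) auto
  then show ?case by (simp add: add.assoc)
qed

lemma tz_span_sum:
  assumes "\<And>x. x \<in> S \<Longrightarrow> g x \<in> tz_span sc s"
  shows "(\<lambda>w. \<Sum>x\<in>S. g x w) \<in> tz_span sc s"
proof (cases "finite S")
  case True
  then show ?thesis using assms
    by (induction S rule: finite_induct) (auto simp: tz_span.tz_zero intro: tz_span_add)
next
  case False
  then show ?thesis by (simp add: tz_span.tz_zero)
qed

lemma msc_zero_left:
  assumes "module sc"
  shows "msc sc 0 A = (\<lambda>_ _. 0)"
  using assms by (simp add: msc_def module.scale_zero_left)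

lemma mat_ok_zero [simp]: "mat_ok n (\<lambda>_ _. 0)"
  by (simp add: mat_ok_def)

lemma delta_zero_factor_in_tz_span:
  assumes "module sc" "\<forall>x\<in>set xs. mat_ok s x" "\<forall>y\<in>set ys. mat_ok s y"
  shows "delta (xs @ [(\<lambda>_ _. 0)] @ ys) \<in> tz_span sc s"
proof -
  have "(\<lambda>w. 0 + 1 * (delta (xs @ [msc sc 0 (\<lambda>_ _. 0)] @ ys) w
          - 0 * delta (xs @ [(\<lambda>_ _. 0)] @ ys) w)) \<in> tz_span sc s"
    using assms by (intro tz_span.tz_scale[OF tz_span.tz_zero]) auto
  then show ?thesis
    using msc_zero_left[OF assms(1)] by simp
qed

lemma multilin_zero_factor:
  assumes "module scM" "module scN" "multilin scM scN s (length (xs @ [(\<lambda>_ _. 0)] @ ys)) \<phi>"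
    "\<forall>x\<in>set xs. mat_ok s x" "\<forall>y\<in>set ys. mat_ok s y"
  shows "\<phi> (xs @ [(\<lambda>_ _. 0)] @ ys) = (\<lambda>_ _. 0)"
proof -
  have "\<phi> (xs @ [msc scM 0 (\<lambda>_ _. 0)] @ ys) = msc scN 0 (\<phi> (xs @ [(\<lambda>_ _. 0)] @ ys))"
    using assms(3-5) unfolding multilin_def by simp
  then show ?thesis
    using msc_zero_left[OF assms(1)] msc_zero_left[OF assms(2)] by simp
qed

definition blk_superdiag :: "nat \<Rightarrow> 'a::zero mat \<Rightarrow> bool" where
  "blk_superdiag s W \<longleftrightarrow> (\<forall>i j. j \<noteq> Suc i \<longrightarrow> blk s W i j = (\<lambda>_ _. 0))"

lemma chain_Nil [simp]: "chain s W i [] k = [blk s W i k]"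
  by (simp add: chain_def)

lemma chain_Cons [simp]: "chain s W i (j # js) k = blk s W i j # chain s W j js k"
  by (simp add: chain_def)

lemma length_chain [simp]: "length (chain s W i js k) = Suc (length js)"
  by (simp add: chain_def)

lemma mat_ok_blk: "mat_ok s (blk s W i j)"
  by (simp add: mat_ok_def blk_def)

lemma mat_ok_chain: "\<forall>x\<in>set (chain s W i js k). mat_ok s x"
  by (induction js arbitrary: i) (simp_all add: mat_ok_blk)

lemma chain_superdiag_cases:
  assumes "blk_superdiag s W"
  obtains "(\<lambda>_ _. 0) \<in> set (chain s W i js k)"
  | "js = [Suc i..<i + Suc (length js)]" "k = i + Suc (length js)"
  using assms
proof (induction js arbitrary: i)
  case Nil
  then show ?case by (cases "k = Suc i") (auto simp: blk_superdiag_def)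
next
  case (Cons j js)
  show ?case
  proof (cases "j = Suc i")
    case True
    show ?thesis
    proof (rule Cons.IH[of j])
      show "(\<lambda>_ _. 0) \<in> set (chain s W j js k) \<Longrightarrow> thesis" using Cons.prems(1) by simp
      assume "js = [Suc j..<j + Suc (length js)]" "k = j + Suc (length js)"
      then have "j # js = [Suc i..<i + Suc (length (j # js))]" "k = i + Suc (length (j # js))"
        using True by (simp_all del: upt_Suc add: upt_conv_Cons)
      then show thesis by (rule Cons.prems(2))
    qed (use Cons.prems(3) in simp)
  next
    case False
    then show ?thesis using Cons.prems(1,3) by (simp add: blk_superdiag_def)
  qed
qed

lemma chain_consecutive:
  assumes "1 \<le> L"
  shows "chain s W i [Suc i..<i + L] (i + L) = map (\<lambda>t. blk s W (i + t) (Suc (i + t))) [0..<L]"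
proof -
  have upt_shift: "[i..<i + L] = map (\<lambda>t. i + t) [0..<L]" for i
    by (induction L) auto
  have "i # [Suc i..<i + L] = map (\<lambda>t. i + t) [0..<L]"
    using assms upt_conv_Cons[of i "i + L"] by (simp add: upt_shift)
  moreover have "[Suc i..<i + L] @ [i + L] = map (\<lambda>t. Suc (i + t)) [0..<L]"
    using assms upt_shift[of "Suc i"] by simp
  ultimately show ?thesis
    by (simp add: chain_def zip_map_map zip_same_conv_map)
qed

lemma finite_seqs: "finite (seqs m n)"
proof -
  have "seqs m n = {xs. set xs \<subseteq> {..<m} \<and> length xs = n}"
    by (auto simp: seqs_def)
  then show ?thesis by (simp add: finite_lists_length_eq)
qed

lemma odot_zero_superdiag:
  assumes "module sc" "blk_superdiag s W"
  shows "odot_zero sc s m W m"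
  unfolding odot_zero_def
proof (intro allI impI)
  fix i k assume "i < m" "k < m"
  have "delta (chain s W i js k) \<in> tz_span sc s" if "js \<in> seqs m (m - 1)" for js
  proof (rule chain_superdiag_cases[OF assms(2), of i js k])
    assume "(\<lambda>_ _. 0) \<in> set (chain s W i js k)"
    then obtain xs ys where "chain s W i js k = xs @ [(\<lambda>_ _. 0)] @ ys"
      by (auto dest: split_list)
    then show ?thesis
      using delta_zero_factor_in_tz_span[OF assms(1)] mat_ok_chain[of s W i js k] by simp
  next
    assume "k = i + Suc (length js)"
    then show ?thesis
      using that \<open>k < m\<close> by (simp add: seqs_def)
  qed
  then show "tpow_elem s m W m i k \<in> tz_span sc s"
    using \<open>i < m\<close> unfolding tpow_elem_def by (auto intro: tz_span_sum)
qed

lemma in_Nilp_if_superdiag: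
  assumes "module sc" "1 \<le> m" "mat_ok (s * m) X" "blk_superdiag s (msub X (blkdiag s m Y))"
  shows "(s * m, X) \<in> Nilp sc s Y"
  using assms odot_zero_superdiag[OF assms(1,4)] unfolding Nilp_def by blast

lemma block_index:
  fixes s i a :: nat
  assumes "a < s"
  shows "(i * s + a) div s = i" "(i * s + a) mod s = a" "i * s + a < s * m \<longleftrightarrow> i < m"
proof -
  show "(i * s + a) div s = i" "(i * s + a) mod s = a"
    using assms by simp_all
  have "i * s + a < m * s \<longleftrightarrow> i < m"
  proof
    assume "i * s + a < m * s"
    then show "i < m" by (metis add_lessD1 mult_less_cancel2)
  next
    assume "i < m"
    then have "Suc i * s \<le> m * s" by (intro mult_le_mono1) simp
    then show "i * s + a < m * s" using assms by simp
  qed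
  then show "i * s + a < s * m \<longleftrightarrow> i < m" by (simp add: mult.commute)
qed

lemma odot_apply_superdiag_block:
  assumes "module scM" "module scN" "multilin scM scN s L \<phi>" "blk_superdiag s W"
    and "i < m" "k < m" "a < s" "b < s"
  shows "odot_apply s m W L \<phi> (i * s + a) (k * s + b) =
    (if i + L = k then \<phi> (map (\<lambda>t. blk s W (i + t) (Suc (i + t))) [0..<L]) a b else 0)"
proof (cases "L = 0")
  case True
  then show ?thesis using assms(5-8) by (simp add: odot_apply_def block_index)
next
  case False
  define path where "path = map (\<lambda>t. blk s W (i + t) (Suc (i + t))) [0..<L]"
  have chain_term: "\<phi> (chain s W i js k) a b =
      (if i + L = k \<and> js = [Suc i..<i + L] then \<phi> path a b else 0)"
    if "js \<in> seqs m (L - 1)" for js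
  proof (cases "i + L = k \<and> js = [Suc i..<i + L]")
    case True
    then show ?thesis using chain_consecutive[of L s W i] False by (simp add: path_def)
  next
    case not_path: False
    have len: "Suc (length js) = L"
      using that False by (simp add: seqs_def)
    show ?thesis
    proof (rule chain_superdiag_cases[OF assms(4), of i js k])
      assume "(\<lambda>_ _. 0) \<in> set (chain s W i js k)"
      then obtain xs ys where "chain s W i js k = xs @ [(\<lambda>_ _. 0)] @ ys"
        by (auto dest: split_list)
      then have "\<phi> (chain s W i js k) = (\<lambda>_ _. 0)"
        using multilin_zero_factor[OF assms(1,2)] assms(3) mat_ok_chain[of s W i js k] len
        by (metis Un_iff length_chain set_append)
      then show ?thesis using not_path by auto
    qed (use not_path len in simp)
  qed
  have "odot_apply s m W L \<phi> (i * s + a) (k * s + b) =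
      (\<Sum>js\<in>seqs m (L - 1). if i + L = k \<and> js = [Suc i..<i + L] then \<phi> path a b else 0)"
    using False assms(5-8) chain_term by (simp add: odot_apply_def block_index)
  also have "\<dots> = (if i + L = k then \<phi> path a b else 0)"
  proof (cases "i + L = k")
    case True
    then have "[Suc i..<i + L] \<in> seqs m (L - 1)"
      using assms(6) by (auto simp: seqs_def)
    with True show ?thesis by (simp add: finite_seqs)
  qed simp
  finally show ?thesis by (simp add: path_def)
qed

lemma lmul_ident:
  assumes "module sc" "mat_ok n X"
  shows "lmul sc n (ident n) X = X"
proof (intro ext)
  fix i k
  have "lmul sc n (ident n) X i k = (\<Sum>j<n. if j = i then X i k else 0)"
    unfolding lmul_def ident_def using assms(1)
    by (intro sum.cong) (auto simp: module.scale_zero_left module.scale_one)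
  then show "lmul sc n (ident n) X i k = X i k"
    using assms(2) by (simp add: mat_ok_def)
qed

lemma rmul_ident:
  assumes "module sc" "mat_ok n X"
  shows "rmul sc n X (ident n) = X"
proof (intro ext)
  fix i k
  have "rmul sc n X (ident n) i k = (\<Sum>j<n. if j = k then X i k else 0)"
    unfolding rmul_def ident_def using assms(1)
    by (intro sum.cong) (auto simp: module.scale_zero_left module.scale_one)
  then show "rmul sc n X (ident n) i k = X i k"
    using assms(2) by (simp add: mat_ok_def)
qed

lemma inv_pair_ident: "inv_pair n (ident n) (ident n)"
proof -
  have "rmat_mul n (ident n) (ident n) i k = ident n i k" for i k
  proof -
    have "rmat_mul n (ident n) (ident n) i k = (\<Sum>j<n. if j = i then ident n i k else 0)"
      unfolding rmat_mul_def by (intro sum.cong) (auto simp: ident_def)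
    also have "\<dots> = ident n i k"
      by (simp add: ident_def)
    finally show ?thesis .
  qed
  then show ?thesis by (auto simp: inv_pair_def mat_ok_def ident_def)
qed

lemma nc_ext_eq:
  assumes "module scM" "module scN" "nc_fun scM scN \<Omega> f" "(n, X) \<in> \<Omega>" "mat_ok n X"
  shows "nc_ext scM scN \<Omega> f n X = f (n, X)"
  unfolding nc_ext_def
proof (rule the_equality)
  have "mat_ok n (f (n, X))"
    using assms(3,4) unfolding nc_fun_def by blast
  then show "\<exists>S T X'. (n, X') \<in> \<Omega> \<and> inv_pair n S T \<and>
      X = rmul scM n (lmul scM n S X') T \<and> f (n, X) = rmul scN n (lmul scN n S (f (n, X'))) T"
    using assms inv_pair_ident lmul_ident rmul_ident by metis
next
  fix V assume "\<exists>S T X'. (n, X') \<in> \<Omega> \<and> inv_pair n S T \<and>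
      X = rmul scM n (lmul scM n S X') T \<and> V = rmul scN n (lmul scN n S (f (n, X'))) T"
  then show "V = f (n, X)"
    using assms(3,4) unfolding nc_fun_def by metis
qed

lemma blk_bidiag_minus_blkdiag:
  fixes Y :: "'a::ab_group_add mat"
  assumes "length Zs = l" "\<forall>Z\<in>set Zs. mat_ok s Z"
  shows "blk s (msub (bidiag s (replicate (Suc l) Y) Zs) (blkdiag s (Suc l) Y)) i j =
     (if j = Suc i \<and> j < Suc l then Zs ! i else (\<lambda>_ _. 0))"
proof (intro ext)
  fix a b
  show "blk s (msub (bidiag s (replicate (Suc l) Y) Zs) (blkdiag s (Suc l) Y)) i j a b =
     (if j = Suc i \<and> j < Suc l then Zs ! i else (\<lambda>_ _. 0)) a b"
  proof (cases "a < s \<and> b < s")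
    case True
    define p q where "p = i * s + a" and "q = j * s + b"
    have idx: "p div s = i" "p mod s = a" "q div s = j" "q mod s = b"
      "p < s + s * l \<longleftrightarrow> i < Suc l" "q < s + s * l \<longleftrightarrow> j < Suc l"
      using True block_index(1,2) block_index(3)[where m = "Suc l"]
      unfolding p_def q_def by simp_all
    have "(Y # replicate l Y) ! k = Y" if "k < Suc l" for k
      using that by (simp add: nth_Cons split: nat.split)
    moreover have "blk s V i j a b = V p q" for V :: "'a mat"
      using True by (simp add: blk_def p_def q_def)
    ultimately show ?thesis
      using assms(1) by (auto simp: msub_def bidiag_def blkdiag_def Let_def idx)
  next
    case False
    have "(Zs ! i) a b = 0" if "i < l"
      using assms that False nth_mem[of i Zs] unfolding mat_ok_def by auto
    then show ?thesis using False by (auto simp: blk_def)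
  qed
qed

lemma series_superdiag_block:
  assumes "module scM" "module scN" "\<forall>L. multilin scM scN s L (fl L)" "blk_superdiag s W"
    and "finite {L. odot_apply s m W L (fl L) \<noteq> (\<lambda>_ _. 0)}"
    and "\<forall>p q. F p q = (\<Sum>L\<in>{L. odot_apply s m W L (fl L) \<noteq> (\<lambda>_ _. 0)}. odot_apply s m W L (fl L) p q)"
    and "i \<le> k" "k < m" "a < s" "b < s"
  shows "F (i * s + a) (k * s + b) = fl (k - i) (map (\<lambda>t. blk s W (i + t) (Suc (i + t))) [0..<k - i]) a b"
proof -
  define c where "c = fl (k - i) (map (\<lambda>t. blk s W (i + t) (Suc (i + t))) [0..<k - i]) a b"
  define S where "S = {L. odot_apply s m W L (fl L) \<noteq> (\<lambda>_ _. 0)}"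
  have entry: "odot_apply s m W L (fl L) (i * s + a) (k * s + b) = (if L = k - i then c else 0)" for L
    using odot_apply_superdiag_block[OF assms(1,2) spec[OF assms(3)] assms(4)] assms(7-10)
    unfolding c_def by auto
  have "F (i * s + a) (k * s + b) = (\<Sum>L\<in>S. if L = k - i then c else 0)"
    using assms(6) entry unfolding S_def by simp
  also have "\<dots> = c"
  proof (cases "k - i \<in> S")
    case False
    then have "c = 0" using entry[of "k - i"] unfolding S_def by (metis (mono_tags) mem_Collect_eq)
    then show ?thesis by (simp add: sum.neutral)
  qed (use assms(5) in \<open>simp add: S_def\<close>)
  finally show ?thesis unfolding c_def .
qed

theorem theorem5p9:
  fixes scM :: "'r::comm_ring_1 \<Rightarrow> 'm::ab_group_add \<Rightarrow> 'm"
    and scN :: "'r \<Rightarrow> 'n::ab_group_add \<Rightarrow> 'n"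
    and s :: nat and Y :: "'m mat"
    and f :: "nat \<times> 'm mat \<Rightarrow> 'n mat"
    and fl :: "nat \<Rightarrow> 'm mat list \<Rightarrow> 'n mat"
  assumes "module scM" and "module scN"
    and "1 \<le> s" and "mat_ok s Y"
    and "nc_fun scM scN (Nilp scM s Y) f"
    and "\<forall>l. multilin scM scN s l (fl l)"
    and "\<forall>m X. 1 \<le> m \<longrightarrow> (s * m, X) \<in> Nilp scM s Y \<longrightarrow>
           finite {l. odot_apply s m (msub X (blkdiag s m Y)) l (fl l) \<noteq> (\<lambda>_ _. 0)} \<and>
           (\<forall>p q. f (s * m, X) p q =
              (\<Sum>l\<in>{l. odot_apply s m (msub X (blkdiag s m Y)) l (fl l) \<noteq> (\<lambda>_ _. 0)}.
                  odot_apply s m (msub X (blkdiag s m Y)) l (fl l) p q))"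
  shows "\<forall>l Zs. length Zs = l \<longrightarrow> (\<forall>Z\<in>set Zs. mat_ok s Z) \<longrightarrow>
           fl l Zs = DeltaR scM scN (Nilp scM s Y) f s (replicate (Suc l) Y) Zs"
proof (intro allI impI)
  fix l and Zs :: "'m mat list"
  assume len: "length Zs = l" and Zs_ok: "\<forall>Z\<in>set Zs. mat_ok s Z"
  define B where "B = bidiag s (replicate (Suc l) Y) Zs"
  define W where "W = msub B (blkdiag s (Suc l) Y)"
  have W_blk: "blk s W i j = (if j = Suc i \<and> j < Suc l then Zs ! i else (\<lambda>_ _. 0))" for i j
    unfolding W_def B_def using blk_bidiag_minus_blkdiag[OF len Zs_ok] .
  then have super: "blk_superdiag s W" and path: "map (\<lambda>t. blk s W t (Suc t)) [0..<l] = Zs"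
    using len by (auto simp: blk_superdiag_def intro: nth_equalityI)
  have B_ok: "mat_ok (s * Suc l) B"
    unfolding B_def mat_ok_def bidiag_def using len by auto
  have B_Nilp: "(s * Suc l, B) \<in> Nilp scM s Y"
    using in_Nilp_if_superdiag[OF assms(1) _ B_ok] super unfolding W_def by simp
  have "DeltaR scM scN (Nilp scM s Y) f s (replicate (Suc l) Y) Zs = blk s (f (s * Suc l, B)) 0 l"
    using nc_ext_eq[OF assms(1,2,5) B_Nilp B_ok] len unfolding DeltaR_def B_def by simp
  moreover have "fl l Zs a b = blk s (f (s * Suc l, B)) 0 l a b" for a b
  proof (cases "a < s \<and> b < s")
    case True
    then show ?thesis
      using series_superdiag_block[OF assms(1,2,6) super, of "Suc l" "f (s * Suc l, B)" 0 l a b]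
        assms(7)[rule_format, OF _ B_Nilp] path
      unfolding W_def by (simp add: blk_def)
  next
    case False
    have "mat_ok s (fl l Zs)" using assms(6) len Zs_ok unfolding multilin_def by blast
    then show ?thesis using False by (auto simp: mat_ok_def blk_def)
  qed
  ultimately show "fl l Zs = DeltaR scM scN (Nilp scM s Y) f s (replicate (Suc l) Y) Zs"
    by auto
qed

end
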